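(* Let $\phi$ be the real root of $x^3=x^2+x+1$. For each integer $n\ge 4$, there exists an integer sequence $\langle a_i\rangle_{i=1}^n$ with $a_i=a_{i-1}+a_{i-2}+a_{i-3}$ for $4\le i\le n$, $a_n=0$, $a_1>0$, $a_2\le 0$, $a_3<0$ and $a_1<0.81\phi^{n/2}$. Similarly, for each integer $n\ge 4$ there exists an integer sequence $\langle b_i\rangle_{i=1}^n$ with $b_i=b_{i-1}+b_{i-2}+b_{i-3}$ for $4\le i\le n$, $b_n=0$, $b_2>0$, $b_1\le 0$, $b_3<0$ and $b_2<0.64\phi^{n/2}$. *)

theory Defs
  imports Complex_Main
begin

end

theory Submission
  imports Defs
begin

text \<open>
  Read the sequence backwards from its last entry: \<open>u k = a (n - k)\<close> satisfies
  \<open>u (k + 3) = u k - u (k + 1) - u (k + 2)\<close> with \<open>u 0 = 0\<close>, \<open>u 1 = q\<close>, \<open>u 2 = p\<close>.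
  The characteristic roots of this backward recurrence are \<open>1/\<phi>\<close> and a complex
  pair of modulus \<open>sqrt \<phi>\<close>. The coordinates \<open>X k = \<phi> * u (k + 1) - u k\<close> remove the
  \<open>1/\<phi>\<close>-component, and a positive definite quadratic form of \<open>(X k, X (k + 1))\<close> is
  multiplied by exactly \<open>\<phi>\<close> at each step. For \<open>|p|, |q| \<le> 1\<close> its initial value is at
  most \<open>3\<phi>\<^sup>2 - \<phi> + 1\<close>, and the sign conditions on \<open>a 1, a 2, a 3\<close> bound the form from
  below by a multiple of \<open>(a 1)\<^sup>2\<close> (resp. \<open>(a 2)\<^sup>2\<close>), which gives the estimates.

  It remains to choose \<open>(p, q)\<close> so that the signs are right. The terms for \<open>(p, q)\<close> are
  fixed linear combinations of those for \<open>(1, 0)\<close>; for \<open>n \<ge> 8\<close> the \<open>1/\<phi>\<close>-component of the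
  latter is negligible against \<open>(X, Y) = (X (n - 3), X (n - 2))\<close>, and a covering of the
  \<open>(X, Y)\<close>-plane by sectors, one pair \<open>(p, q)\<close> per sector, finds a suitable pair.
  For \<open>n \<le> 7\<close> explicit pairs are given.
\<close>

section \<open>The real root of the cubic\<close>

lemma tribonacci_root_gt_one:
  fixes \<phi> :: real
  assumes "\<phi>^3 = \<phi>^2 + \<phi> + 1"
  shows "1 < \<phi>"
proof (rule ccontr)
  assume "\<not> 1 < \<phi>"
  have "\<phi>^2 + \<phi> + 1 = (\<phi> + 1/2)^2 + 3/4"
    by (simp add: power2_eq_square algebra_simps)
  then have "0 < \<phi>^3"
    using assms zero_le_power2[of "\<phi> + 1/2"] by linarith
  then have "0 < \<phi>"
    by (simp add: zero_less_power_eq)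
  then have "\<phi>^3 \<le> 1"
    using \<open>\<not> 1 < \<phi>\<close> by (simp add: power_le_one)
  then show False
    using assms \<open>0 < \<phi>\<close> zero_le_power2[of \<phi>] by linarith
qed

lemma tribonacci_cubic_less_iff:
  fixes \<phi> x :: real
  assumes "\<phi>^3 = \<phi>^2 + \<phi> + 1" and "1 < x"
  shows "x^3 - x^2 - x - 1 < 0 \<longleftrightarrow> x < \<phi>"
proof -
  have "x^3 - x^2 - x - 1 = (x - \<phi>) * (x*(x-1) + \<phi>*(\<phi>-1) + x*\<phi> - 1)"
    using assms(1) by (simp add: algebra_simps power2_eq_square power3_eq_cube)
  moreover have "0 < x*(x-1) + \<phi>*(\<phi>-1) + x*\<phi> - 1"
  proof -
    have "1 < \<phi>" using tribonacci_root_gt_one[OF assms(1)] .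
    then have "1*1 < x*\<phi>" using \<open>1 < x\<close> by (intro mult_strict_mono) auto
    moreover have "0 \<le> x*(x-1)" "0 \<le> \<phi>*(\<phi>-1)" using \<open>1 < x\<close> \<open>1 < \<phi>\<close> by simp_all
    ultimately show ?thesis by linarith
  qed
  ultimately show ?thesis by (simp add: mult_less_0_iff)
qed

lemma tribonacci_root_bounds:
  fixes \<phi> :: real
  assumes "\<phi>^3 = \<phi>^2 + \<phi> + 1"
  shows "18392867/10000000 \<le> \<phi>" and "\<phi> \<le> 18392868/10000000"
  using tribonacci_cubic_less_iff[OF assms, of "18392867/10000000"]
    tribonacci_cubic_less_iff[OF assms, of "18392868/10000000"]
  by (simp_all add: power3_eq_cube power2_eq_square)

lemma tribonacci_root_square_bounds:
  fixes \<phi> :: real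
  assumes "\<phi>^3 = \<phi>^2 + \<phi> + 1"
  shows "33829755/10000000 \<le> \<phi>^2" and "\<phi>^2 \<le> 3382976/1000000"
proof -
  note bounds = tribonacci_root_bounds[OF assms]
  have "(18392867/10000000) * (18392867/10000000) \<le> \<phi> * \<phi>" using bounds by (intro mult_mono) auto
  then show "33829755/10000000 \<le> \<phi>^2" by (simp add: power2_eq_square)
  have "\<phi> * \<phi> \<le> (18392868/10000000) * (18392868/10000000)" using bounds by (intro mult_mono) auto
  then show "\<phi>^2 \<le> 3382976/1000000" by (simp add: power2_eq_square)
qed

lemma mult_bounds_abs:
  fixes a x :: real
  assumes "lo \<le> a" "a \<le> lo + e"
  shows "lo * x - e * \<bar>x\<bar> \<le> a * x" and "a * x \<le> lo * x + e * \<bar>x\<bar>"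
proof -
  have "0 \<le> e" using assms by linarith
  consider "0 \<le> x" "\<bar>x\<bar> = x" | "x \<le> 0" "\<bar>x\<bar> = - x" by linarith
  then have "lo * x - e * \<bar>x\<bar> \<le> a * x \<and> a * x \<le> lo * x + e * \<bar>x\<bar>"
  proof cases
    case 1
    then have "lo * x \<le> a * x" "a * x \<le> (lo + e) * x" using assms by (simp_all add: mult_right_mono)
    moreover have "0 \<le> e * x" using \<open>0 \<le> e\<close> 1 by simp
    ultimately show ?thesis using 1 by (simp add: distrib_right)
  next
    case 2
    then have "a * x \<le> lo * x" "(lo + e) * x \<le> a * x" using assms by (simp_all add: mult_right_mono_neg)
    moreover have "e * x \<le> 0" using \<open>0 \<le> e\<close> 2 by (simp add: mult_nonneg_nonpos)
    ultimately show ?thesis using 2 by (simp add: distrib_right)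
  qed
  then show "lo * x - e * \<bar>x\<bar> \<le> a * x" and "a * x \<le> lo * x + e * \<bar>x\<bar>" by simp_all
qed

lemma tribonacci_root_mult_bounds:
  fixes \<phi> x :: real
  assumes cubic: "\<phi>^3 = \<phi>^2 + \<phi> + 1"
  shows "18392867/10000000 * x - 1/10000000 * \<bar>x\<bar> \<le> \<phi> * x"
    and "\<phi> * x \<le> 18392867/10000000 * x + 1/10000000 * \<bar>x\<bar>"
    and "33829755/10000000 * x - 5/10000000 * \<bar>x\<bar> \<le> \<phi>^2 * x"
    and "\<phi>^2 * x \<le> 33829755/10000000 * x + 5/10000000 * \<bar>x\<bar>"
    and "- 2 * \<bar>x\<bar> \<le> \<phi> * x" and "\<phi> * x \<le> 2 * \<bar>x\<bar>"
    and "- 4 * \<bar>x\<bar> \<le> \<phi>^2 * x" and "\<phi>^2 * x \<le> 4 * \<bar>x\<bar>"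
  using mult_bounds_abs[of "18392867/10000000" \<phi> "1/10000000" x]
    mult_bounds_abs[of "33829755/10000000" "\<phi>^2" "5/10000000" x]
    mult_bounds_abs[of 0 \<phi> 2 x] mult_bounds_abs[of 0 "\<phi>^2" 4 x]
    tribonacci_root_bounds[OF cubic] tribonacci_root_square_bounds[OF cubic]
  by simp_all

section \<open>Coordinates for the backward recurrence\<close>

text \<open>
  For a solution \<open>u\<close> of the backward recurrence, \<open>osc_coord\<close> annihilates the component
  along the real characteristic root \<open>1/\<phi>\<close>, \<open>decay_coord\<close> is that component (divided by
  \<open>\<phi>\<close> at each step), and \<open>norm_form\<close> is the norm form of the complex root pair
  (multiplied by \<open>\<phi>\<close> at each step).
\<close>

definition osc_coord :: "real \<Rightarrow> (nat \<Rightarrow> real) \<Rightarrow> nat \<Rightarrow> real" where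
  "osc_coord \<phi> u k = \<phi> * u (Suc k) - u k"

definition decay_coord :: "real \<Rightarrow> (nat \<Rightarrow> real) \<Rightarrow> nat \<Rightarrow> real" where
  "decay_coord \<phi> u k = u k + (\<phi> - 1) * u (Suc k) + (\<phi>^2 - \<phi> - 1) * u (Suc (Suc k))"

definition norm_form :: "real \<Rightarrow> real \<Rightarrow> real \<Rightarrow> real" where
  "norm_form \<phi> s t = t^2 + (\<phi>^2 - \<phi>) * s * t + \<phi> * s^2"

context
  fixes \<phi> :: real and u :: "nat \<Rightarrow> real"
  assumes cubic: "\<phi>^3 = \<phi>^2 + \<phi> + 1"
    and back_rec: "\<And>k. u (Suc (Suc (Suc k))) = u k - u (Suc k) - u (Suc (Suc k))"
begin

lemma osc_coord_step:
  "osc_coord \<phi> u (Suc (Suc k)) = -(\<phi>^2 - \<phi>) * osc_coord \<phi> u (Suc k) - \<phi> * osc_coord \<phi> u k"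
proof -
  have "osc_coord \<phi> u (Suc (Suc k)) - (-(\<phi>^2 - \<phi>) * osc_coord \<phi> u (Suc k) - \<phi> * osc_coord \<phi> u k)
      = (\<phi>^3 - \<phi>^2 - \<phi> - 1) * u (Suc (Suc k))"
    unfolding osc_coord_def back_rec by (simp add: algebra_simps power2_eq_square power3_eq_cube)
  then show ?thesis using cubic by simp
qed

lemma norm_form_osc_coord:
  "norm_form \<phi> (osc_coord \<phi> u k) (osc_coord \<phi> u (Suc k))
     = \<phi>^k * norm_form \<phi> (osc_coord \<phi> u 0) (osc_coord \<phi> u 1)"
proof (induction k)
  case (Suc k)
  have "norm_form \<phi> t (-(\<phi>^2 - \<phi>) * t - \<phi> * s) = \<phi> * norm_form \<phi> s t" for s t
    unfolding norm_form_def by (simp add: algebra_simps power2_eq_square)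
  then show ?case using Suc by (simp add: osc_coord_step)
qed simp

lemma decay_coord_power: "\<phi>^k * decay_coord \<phi> u k = decay_coord \<phi> u 0"
proof (induction k)
  case (Suc k)
  have "\<phi> * decay_coord \<phi> u (Suc k) - decay_coord \<phi> u k
      = (\<phi>^3 - \<phi>^2 - \<phi> - 1) * u (Suc (Suc (Suc k)))"
    unfolding decay_coord_def back_rec by (simp add: algebra_simps power2_eq_square power3_eq_cube)
  then have "\<phi> * decay_coord \<phi> u (Suc k) = decay_coord \<phi> u k"
    using cubic by simp
  then show ?case
    using Suc by (metis mult.assoc mult.commute power_Suc)
qed simp

end

text \<open>Inverse of the change of coordinates, up to the factor \<open>3\<phi>\<^sup>2 - 2\<phi> - 1\<close>
  (see \<open>triple_of_coords_eq\<close>), written linearly in the products of \<open>\<phi>\<close>, \<open>\<phi>\<^sup>2\<close> with the coordinates.\<close>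

definition triple_of_coords :: "real \<Rightarrow> real \<Rightarrow> real \<Rightarrow> real \<Rightarrow> real \<times> real \<times> real" where
  "triple_of_coords \<phi> X Y F =
     (- 2 * (\<phi>^2 * X) + 2 * (\<phi> * X) + X - Y + \<phi>^2 * F,
      \<phi> * X - \<phi>^2 * Y + \<phi> * Y + Y + \<phi> * F,
      X + 2 * (\<phi> * Y) - Y + F)"

lemma triple_of_coords_eq:
  fixes \<phi> :: real and u :: "nat \<Rightarrow> real"
  assumes cubic: "\<phi>^3 = \<phi>^2 + \<phi> + 1"
  shows "triple_of_coords \<phi> (osc_coord \<phi> u k) (osc_coord \<phi> u (Suc k)) (decay_coord \<phi> u k)
    = ((3*\<phi>^2 - 2*\<phi> - 1) * u k, (3*\<phi>^2 - 2*\<phi> - 1) * u (Suc k), (3*\<phi>^2 - 2*\<phi> - 1) * u (Suc (Suc k)))"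
proof -
  have "(-2*\<phi>^2 + 2*\<phi> + 1) * osc_coord \<phi> u k - osc_coord \<phi> u (Suc k) + \<phi>^2 * decay_coord \<phi> u k
      - (3*\<phi>^2 - 2*\<phi> - 1) * u k
      = (\<phi>^3 - \<phi>^2 - \<phi> - 1) * (\<phi> * u (Suc (Suc k)) - u (Suc k))"
    unfolding osc_coord_def decay_coord_def by (simp add: algebra_simps power2_eq_square power3_eq_cube)
  then show ?thesis
    using cubic unfolding triple_of_coords_def osc_coord_def decay_coord_def
    by (simp add: algebra_simps power2_eq_square)
qed

lemma norm_form_lower_bounds:
  fixes \<phi> s t :: real
  assumes cubic: "\<phi>^3 = \<phi>^2 + \<phi> + 1" and "0 < \<phi>"
  shows "(\<phi>^2 - 2*\<phi> + 3) * t^2 \<le> 4 * norm_form \<phi> s t"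
    and "\<phi> * (\<phi>^2 - 2*\<phi> + 3) * s^2 \<le> 4 * norm_form \<phi> s t"
proof -
  have "4 * \<phi> * norm_form \<phi> s t - (2*\<phi>*s + (\<phi>^2 - \<phi>)*t)^2 - \<phi> * (\<phi>^2 - 2*\<phi> + 3) * t^2
      = - \<phi> * t^2 * (\<phi>^3 - \<phi>^2 - \<phi> - 1)"
    unfolding norm_form_def by (simp add: algebra_simps power2_eq_square power3_eq_cube)
  then have "\<phi> * ((\<phi>^2 - 2*\<phi> + 3) * t^2) \<le> \<phi> * (4 * norm_form \<phi> s t)"
    using cubic zero_le_power2[of "2*\<phi>*s + (\<phi>^2 - \<phi>)*t"] by (simp add: algebra_simps)
  then show "(\<phi>^2 - 2*\<phi> + 3) * t^2 \<le> 4 * norm_form \<phi> s t"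
    using \<open>0 < \<phi>\<close> by simp
  have "4 * norm_form \<phi> s t - (2*t + (\<phi>^2 - \<phi>)*s)^2 - \<phi> * (\<phi>^2 - 2*\<phi> + 3) * s^2
      = - \<phi> * s^2 * (\<phi>^3 - \<phi>^2 - \<phi> - 1)"
    unfolding norm_form_def by (simp add: algebra_simps power2_eq_square power3_eq_cube)
  then have "4 * norm_form \<phi> s t = (2*t + (\<phi>^2 - \<phi>)*s)^2 + \<phi> * (\<phi>^2 - 2*\<phi> + 3) * s^2"
    using cubic by simp
  then show "\<phi> * (\<phi>^2 - 2*\<phi> + 3) * s^2 \<le> 4 * norm_form \<phi> s t"
    by (metis le_add_same_cancel2 zero_le_power2)
qed

lemma norm_form_upper_bound:
  fixes \<phi> s t :: real
  assumes "1 \<le> \<phi>" "\<phi> \<le> 3"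
  shows "norm_form \<phi> s t \<le> \<phi> * (\<bar>s\<bar> + \<bar>t\<bar>)^2"
proof -
  have "(\<phi>^2 - \<phi>) * (s * t) \<le> (\<phi>^2 - \<phi>) * (\<bar>s\<bar> * \<bar>t\<bar>)"
    using assms by (intro mult_left_mono) (auto simp: power2_eq_square abs_mult[symmetric])
  also have "\<dots> \<le> 2 * \<phi> * (\<bar>s\<bar> * \<bar>t\<bar>)"
    using assms by (intro mult_right_mono) (auto simp: power2_eq_square)
  finally have "(\<phi>^2 - \<phi>) * (s * t) \<le> 2 * \<phi> * (\<bar>s\<bar> * \<bar>t\<bar>)" .
  moreover have "1 * t^2 \<le> \<phi> * t^2" using assms by (intro mult_right_mono) auto
  ultimately show ?thesis
    unfolding norm_form_def power2_sum by (simp add: algebra_simps)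
qed

lemma norm_form_initial_le:
  fixes \<phi> p q :: real
  assumes cubic: "\<phi>^3 = \<phi>^2 + \<phi> + 1" and "1 \<le> \<phi>" and "\<bar>p\<bar> \<le> 1" "\<bar>q\<bar> \<le> 1"
  shows "norm_form \<phi> (\<phi> * q) (\<phi> * p - q) \<le> 3 * \<phi>^2 - \<phi> + 1"
proof -
  have "norm_form \<phi> (\<phi> * q) (\<phi> * p - q) - (\<phi>^2 * p^2 + (\<phi>^2 - \<phi>) * (p * q) + (\<phi>^2 + 1) * q^2)
      = (\<phi>^3 - \<phi>^2 - \<phi> - 1) * \<phi> * p * q"
    unfolding norm_form_def by (simp add: algebra_simps power2_eq_square power3_eq_cube)
  then have "norm_form \<phi> (\<phi> * q) (\<phi> * p - q) = \<phi>^2 * p^2 + (\<phi>^2 - \<phi>) * (p * q) + (\<phi>^2 + 1) * q^2"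
    using cubic by simp
  moreover have "\<phi>^2 * p^2 \<le> \<phi>^2" "(\<phi>^2 + 1) * q^2 \<le> \<phi>^2 + 1"
    using assms by (intro mult_left_le; simp add: abs_le_square_iff[of _ 1, simplified])+
  moreover have "(\<phi>^2 - \<phi>) * (p * q) \<le> \<phi>^2 - \<phi>"
  proof (rule mult_left_le)
    have "\<bar>p * q\<bar> \<le> 1" unfolding abs_mult using assms by (intro mult_le_one) auto
    then show "p * q \<le> 1" by (metis abs_ge_self order_trans)
    show "0 \<le> \<phi>^2 - \<phi>" using \<open>1 \<le> \<phi>\<close> by (simp add: power2_eq_square)
  qed
  ultimately show ?thesis by linarith
qed

section \<open>Sequences ending in \<open>0\<close>\<close>

text \<open>The sequence of the theorem is \<open>a i = back_trib p q (n - i)\<close>, so \<open>a (n - 1) = q\<close>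
  and \<open>a (n - 2) = p\<close>.\<close>

fun back_trib :: "int \<Rightarrow> int \<Rightarrow> nat \<Rightarrow> int" where
  "back_trib p q 0 = 0"
| "back_trib p q (Suc 0) = q"
| "back_trib p q (Suc (Suc 0)) = p"
| "back_trib p q (Suc (Suc (Suc k))) =
     back_trib p q k - back_trib p q (Suc k) - back_trib p q (Suc (Suc k))"

lemma back_trib_linear: "back_trib p q k = (p + q) * back_trib 1 0 k + q * back_trib 1 0 (Suc k)"
  by (induction p q k rule: back_trib.induct) (simp_all add: algebra_simps numeral_eq_Suc)

lemma back_trib_reverse_rec:
  assumes "4 \<le> i" "i \<le> n"
  shows "back_trib p q (n - i)
    = back_trib p q (n - (i - 1)) + back_trib p q (n - (i - 2)) + back_trib p q (n - (i - 3))"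
proof -
  have "n - (i - 1) = Suc (n - i)" "n - (i - 2) = Suc (Suc (n - i))" "n - (i - 3) = Suc (Suc (Suc (n - i)))"
    using assms by auto
  then show ?thesis by simp
qed

lemma norm_form_back_trib:
  fixes \<phi> :: real and p q :: int
  assumes cubic: "\<phi>^3 = \<phi>^2 + \<phi> + 1"
  defines "u \<equiv> \<lambda>k. real_of_int (back_trib p q k)"
  shows "norm_form \<phi> (osc_coord \<phi> u k) (osc_coord \<phi> u (Suc k))
    = \<phi>^k * norm_form \<phi> (\<phi> * of_int q) (\<phi> * of_int p - of_int q)"
  using norm_form_osc_coord[OF cubic, of u k] unfolding u_def
  by (simp add: osc_coord_def)

lemma norm_form_back_trib_le:
  fixes \<phi> :: real
  assumes cubic: "\<phi>^3 = \<phi>^2 + \<phi> + 1" and "\<bar>p\<bar> \<le> 1" "\<bar>q\<bar> \<le> 1"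
  shows "norm_form \<phi> (\<phi> * of_int (back_trib p q (Suc m)) - of_int (back_trib p q m))
      (\<phi> * of_int (back_trib p q (Suc (Suc m))) - of_int (back_trib p q (Suc m)))
    \<le> \<phi>^m * (3 * \<phi>^2 - \<phi> + 1)"
proof -
  have "1 < \<phi>" by (rule tribonacci_root_gt_one[OF cubic])
  have "norm_form \<phi> (\<phi> * of_int q) (\<phi> * of_int p - of_int q) \<le> 3 * \<phi>^2 - \<phi> + 1"
    using assms \<open>1 < \<phi>\<close> by (intro norm_form_initial_le) auto
  then show ?thesis
    using norm_form_back_trib[OF cubic, of p q m] \<open>1 < \<phi>\<close>
    by (simp add: osc_coord_def mult_left_mono)
qed

lemma back_trib_decay_small:
  fixes \<phi> :: real
  assumes cubic: "\<phi>^3 = \<phi>^2 + \<phi> + 1" and "5 \<le> m"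
  defines "u \<equiv> \<lambda>k. real_of_int (back_trib 1 0 k)"
  defines "X \<equiv> osc_coord \<phi> u m" and "Y \<equiv> osc_coord \<phi> u (Suc m)" and "F \<equiv> decay_coord \<phi> u m"
  shows "200 * \<bar>F\<bar> \<le> \<bar>X\<bar> + \<bar>Y\<bar>" and "0 < \<bar>X\<bar> + \<bar>Y\<bar>"
proof -
  note bounds = tribonacci_root_bounds[OF cubic] tribonacci_root_square_bounds[OF cubic]
  have "0 < \<phi>" using bounds by linarith
  have "\<phi> * \<phi>^(Suc m) = norm_form \<phi> X Y"
    using norm_form_back_trib[OF cubic, of 1 0 m] unfolding X_def Y_def u_def
    by (simp add: norm_form_def power2_eq_square)
  also have "\<dots> \<le> \<phi> * (\<bar>X\<bar> + \<bar>Y\<bar>)^2"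
    using bounds by (intro norm_form_upper_bound) linarith+
  finally have growth: "\<phi>^(Suc m) \<le> (\<bar>X\<bar> + \<bar>Y\<bar>)^2"
    using \<open>0 < \<phi>\<close> by simp
  then have "0 < (\<bar>X\<bar> + \<bar>Y\<bar>)^2"
    using \<open>0 < \<phi>\<close> by (meson order_less_le_trans zero_less_power)
  then show "0 < \<bar>X\<bar> + \<bar>Y\<bar>"
    by (metis abs_ge_zero add_nonneg_nonneg order_le_less zero_less_power2)
  have "\<phi>^m * F = \<phi>^2 - \<phi> - 1"
    using decay_coord_power[OF cubic, of u m] unfolding F_def u_def
    by (simp add: decay_coord_def)
  have "(200 * \<bar>F\<bar>)^2 * \<phi>^(2 * m) = 40000 * (\<phi>^m * F)^2"
    by (simp add: power_even_eq power_mult_distrib)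
  also have "\<dots> = 40000 * (\<phi>^2 - \<phi> - 1)^2"
    using \<open>\<phi>^m * F = \<phi>^2 - \<phi> - 1\<close> by simp
  also have "\<dots> \<le> 40000 * (5437/10000)^2"
    using bounds by (intro mult_left_mono power_mono) linarith+
  also have "\<dots> \<le> (9/5)^16"
    by (simp add: power_divide)
  also have "\<dots> \<le> \<phi>^16"
    using bounds by (intro power_mono) auto
  also have "\<dots> \<le> \<phi>^(Suc m + 2 * m)"
    using bounds \<open>5 \<le> m\<close> by (intro power_increasing) auto
  also have "\<dots> = \<phi>^(Suc m) * \<phi>^(2 * m)"
    by (rule power_add)
  finally have "(200 * \<bar>F\<bar>)^2 \<le> \<phi>^(Suc m)"
    using \<open>0 < \<phi>\<close> by (metis mult_le_cancel_right_pos zero_less_power)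
  then have "(200 * \<bar>F\<bar>)^2 \<le> (\<bar>X\<bar> + \<bar>Y\<bar>)^2"
    using growth by linarith
  then show "200 * \<bar>F\<bar> \<le> \<bar>X\<bar> + \<bar>Y\<bar>"
    by (rule power2_le_imp_le) simp
qed

lemma back_trib_coords:
  fixes \<phi> :: real
  assumes cubic: "\<phi>^3 = \<phi>^2 + \<phi> + 1" and "5 \<le> m"
  obtains D X Y F where "0 < D" "200 * \<bar>F\<bar> \<le> \<bar>X\<bar> + \<bar>Y\<bar>" "0 < \<bar>X\<bar> + \<bar>Y\<bar>"
    "triple_of_coords \<phi> X Y F = (D * of_int (back_trib 1 0 m), D * of_int (back_trib 1 0 (Suc m)),
       D * of_int (back_trib 1 0 (Suc (Suc m))))"
proof
  note bounds = tribonacci_root_bounds[OF cubic] tribonacci_root_square_bounds[OF cubic]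
  show "0 < 3 * \<phi>^2 - 2 * \<phi> - 1" using bounds by linarith
qed (use back_trib_decay_small[OF assms] triple_of_coords_eq[OF cubic] in auto)

lemma sign_pattern_a_size_bound:
  fixes \<phi> x y z :: real
  assumes cubic: "\<phi>^3 = \<phi>^2 + \<phi> + 1" and "y \<le> 0" "0 < z"
    and invariant: "norm_form \<phi> (\<phi> * y - x) (\<phi> * z - y) \<le> \<phi>^m * (3 * \<phi>^2 - \<phi> + 1)"
  shows "z^2 < 0.81^2 * \<phi>^(m + 3)"
proof -
  note bounds = tribonacci_root_bounds[OF cubic] tribonacci_root_square_bounds[OF cubic]
  define P where "P = \<phi>^2 - 2*\<phi> + 3"
  have "0 < \<phi>" using bounds by linarith
  have "0 < P" unfolding P_def using bounds by linarith
  have "P * \<phi>^5 - (11 * \<phi>^2 + 8 * \<phi> + 5)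
      = (\<phi>^3 - \<phi>^2 - \<phi> - 1) * (\<phi>^4 - \<phi>^3 + 3 * \<phi>^2 + 3 * \<phi> + 5)"
    unfolding P_def by (simp add: algebra_simps power2_eq_square power3_eq_cube numeral_eq_Suc)
  then have numeric: "4 * (3 * \<phi>^2 - \<phi> + 1) < 0.81^2 * (P * \<phi>^5)"
    using cubic bounds by (simp add: power2_eq_square)
  have "(\<phi> * z)^2 \<le> (\<phi> * z - y)^2"
    using assms \<open>0 < \<phi>\<close> by (intro power_mono) auto
  then have "(P * \<phi>^2) * z^2 \<le> P * (\<phi> * z - y)^2"
    using \<open>0 < P\<close> by (simp add: power_mult_distrib mult.assoc)
  also have "\<dots> \<le> 4 * norm_form \<phi> (\<phi> * y - x) (\<phi> * z - y)"
    unfolding P_def by (rule norm_form_lower_bounds(1)[OF cubic \<open>0 < \<phi>\<close>])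
  also have "\<dots> \<le> 4 * (\<phi>^m * (3 * \<phi>^2 - \<phi> + 1))"
    using invariant by simp
  also have "\<dots> < \<phi>^m * (0.81^2 * (P * \<phi>^5))"
    using mult_strict_left_mono[OF numeric, of "\<phi>^m"] \<open>0 < \<phi>\<close> by (simp add: algebra_simps)
  also have "\<dots> = (P * \<phi>^2) * (0.81^2 * \<phi>^(m + 3))"
    by (simp add: power_add numeral_eq_Suc algebra_simps)
  finally show ?thesis
    using \<open>0 < \<phi>\<close> \<open>0 < P\<close> by simp
qed

lemma sign_pattern_b_size_bound:
  fixes \<phi> x y z :: real
  assumes cubic: "\<phi>^3 = \<phi>^2 + \<phi> + 1" and "x \<le> 0" "0 < y"
    and invariant: "norm_form \<phi> (\<phi> * y - x) (\<phi> * z - y) \<le> \<phi>^m * (3 * \<phi>^2 - \<phi> + 1)"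
  shows "y^2 < 0.64^2 * \<phi>^(m + 3)"
proof -
  note bounds = tribonacci_root_bounds[OF cubic] tribonacci_root_square_bounds[OF cubic]
  define P where "P = \<phi>^2 - 2*\<phi> + 3"
  have "0 < \<phi>" using bounds by linarith
  have "0 < P" unfolding P_def using bounds by linarith
  have "P * \<phi>^6 - (19 * \<phi>^2 + 16 * \<phi> + 11)
      = (\<phi>^3 - \<phi>^2 - \<phi> - 1) * (\<phi>^5 - \<phi>^4 + 3 * \<phi>^3 + 3 * \<phi>^2 + 5 * \<phi> + 11)"
    unfolding P_def by (simp add: algebra_simps power2_eq_square power3_eq_cube numeral_eq_Suc)
  then have numeric: "4 * (3 * \<phi>^2 - \<phi> + 1) < 0.64^2 * (P * \<phi>^6)"
    using cubic bounds by (simp add: power2_eq_square)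
  have "(\<phi> * y)^2 \<le> (\<phi> * y - x)^2"
    using assms \<open>0 < \<phi>\<close> by (intro power_mono) auto
  then have "(P * \<phi>^3) * y^2 \<le> \<phi> * P * (\<phi> * y - x)^2"
    using \<open>0 < P\<close> \<open>0 < \<phi>\<close> by (simp add: power_mult_distrib power3_eq_cube power2_eq_square algebra_simps)
  also have "\<dots> \<le> 4 * norm_form \<phi> (\<phi> * y - x) (\<phi> * z - y)"
    unfolding P_def by (rule norm_form_lower_bounds(2)[OF cubic \<open>0 < \<phi>\<close>])
  also have "\<dots> \<le> 4 * (\<phi>^m * (3 * \<phi>^2 - \<phi> + 1))"
    using invariant by simp
  also have "\<dots> < \<phi>^m * (0.64^2 * (P * \<phi>^6))"
    using mult_strict_left_mono[OF numeric, of "\<phi>^m"] \<open>0 < \<phi>\<close> by (simp add: algebra_simps)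
  also have "\<dots> = (P * \<phi>^3) * (0.64^2 * \<phi>^(m + 3))"
    by (simp add: power_add numeral_eq_Suc algebra_simps)
  finally show ?thesis
    using \<open>0 < \<phi>\<close> \<open>0 < P\<close> by simp
qed

lemma less_mult_powr_half:
  fixes \<phi> c x :: real
  assumes "0 < \<phi>" "0 < c" "x^2 < c^2 * \<phi>^n"
  shows "x < c * \<phi> powr (real n / 2)"
proof -
  have "(\<phi> powr (real n / 2))^2 = \<phi>^n"
    using powr_power[of \<phi> "real n / 2" 2] powr_realpow[of \<phi> n] \<open>0 < \<phi>\<close> by simp
  then have "x^2 < (c * \<phi> powr (real n / 2))^2"
    using assms(3) by (simp add: power_mult_distrib)
  moreover have "0 \<le> c * \<phi> powr (real n / 2)"
    using assms by simp
  ultimately show ?thesis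
    using power_less_imp_less_base by blast
qed

section \<open>Choosing the signs\<close>

text \<open>A triple \<open>(x, y, z)\<close> stands for \<open>(a 3, a 2, a 1)\<close>.\<close>

definition sign_pattern_a :: "'a::linordered_idom \<times> 'a \<times> 'a \<Rightarrow> bool" where
  "sign_pattern_a = (\<lambda>(x, y, z). x < 0 \<and> y \<le> 0 \<and> 0 < z)"

definition sign_pattern_b :: "'a::linordered_idom \<times> 'a \<times> 'a \<Rightarrow> bool" where
  "sign_pattern_b = (\<lambda>(x, y, z). x < 0 \<and> 0 < y \<and> z \<le> 0)"

definition mix_triple :: "'a::comm_ring \<Rightarrow> 'a \<Rightarrow> 'a \<times> 'a \<times> 'a \<Rightarrow> 'a \<times> 'a \<times> 'a" where
  "mix_triple p q =
     (\<lambda>(x, y, z). ((p + q) * x + q * y, (p + q) * y + q * z, q * x - q * y + p * z))"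

lemma back_trib_triple:
  "(back_trib p q k, back_trib p q (Suc k), back_trib p q (Suc (Suc k)))
     = mix_triple p q (back_trib 1 0 k, back_trib 1 0 (Suc k), back_trib 1 0 (Suc (Suc k)))"
  using back_trib_linear[of p q k] back_trib_linear[of p q "Suc k"] back_trib_linear[of p q "Suc (Suc k)"]
  by (simp add: mix_triple_def algebra_simps)

lemma mix_triple_scale_of_int:
  "mix_triple (of_int p) (of_int q) (D * of_int x, D * of_int y, D * of_int z)
     = (case mix_triple p q (x, y, z) of (a, b, c) \<Rightarrow> (D * of_int a, D * of_int b, D * of_int c))"
  by (simp add: mix_triple_def algebra_simps)

lemma sign_pattern_a_scale:
  fixes D :: real
  assumes "0 < D"
  shows "sign_pattern_a (D * of_int x, D * of_int y, D * of_int z) \<longleftrightarrow> sign_pattern_a (x, y, z)"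
  using assms by (simp add: sign_pattern_a_def zero_less_mult_iff mult_le_0_iff mult_less_0_iff)

lemma sign_pattern_b_scale:
  fixes D :: real
  assumes "0 < D"
  shows "sign_pattern_b (D * of_int x, D * of_int y, D * of_int z) \<longleftrightarrow> sign_pattern_b (x, y, z)"
  using assms by (simp add: sign_pattern_b_def zero_less_mult_iff mult_le_0_iff mult_less_0_iff)

lemma sign_pattern_a_mix_scale:
  fixes D :: real
  assumes "0 < D"
  shows "sign_pattern_a (mix_triple (of_int p) (of_int q) (D * of_int x, D * of_int y, D * of_int z))
    \<longleftrightarrow> sign_pattern_a (mix_triple p q (x, y, z))"
  using assms by (cases "mix_triple p q (x, y, z)") (simp add: mix_triple_scale_of_int sign_pattern_a_scale)

lemma sign_pattern_b_mix_scale: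
  fixes D :: real
  assumes "0 < D"
  shows "sign_pattern_b (mix_triple (of_int p) (of_int q) (D * of_int x, D * of_int y, D * of_int z))
    \<longleftrightarrow> sign_pattern_b (mix_triple p q (x, y, z))"
  using assms by (cases "mix_triple p q (x, y, z)") (simp add: mix_triple_scale_of_int sign_pattern_b_scale)

text \<open>
  In each sector below, \<open>tribonacci_root_mult_bounds\<close> turns the sign conditions into
  linear arithmetic in \<open>X\<close>, \<open>Y\<close> and \<open>|F|\<close>.
\<close>

lemma sign_pattern_a_cover_first_quadrant:
  fixes \<phi> X Y F :: real
  assumes cubic: "\<phi>^3 = \<phi>^2 + \<phi> + 1" and "0 \<le> X" "0 \<le> Y"
    and small: "200 * \<bar>F\<bar> \<le> \<bar>X\<bar> + \<bar>Y\<bar>" and nonzero: "0 < \<bar>X\<bar> + \<bar>Y\<bar>"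
  shows "\<exists>p q. \<bar>p\<bar> \<le> 1 \<and> \<bar>q\<bar> \<le> 1 \<and>
    sign_pattern_a (mix_triple (real_of_int p) (real_of_int q) (triple_of_coords \<phi> X Y F))"
proof -
  obtain z0 z1 z2 where z: "triple_of_coords \<phi> X Y F = (z0, z1, z2)" by (rule prod_cases3)
  then have "z0 = - 2 * (\<phi>^2 * X) + 2 * (\<phi> * X) + X - Y + \<phi>^2 * F"
    "z1 = \<phi> * X - \<phi>^2 * Y + \<phi> * Y + Y + \<phi> * F" "z2 = X + 2 * (\<phi> * Y) - Y + F"
    by (simp_all add: triple_of_coords_def)
  note facts = this small nonzero abs_ge_self[of F] abs_ge_minus_self[of F] assms(2,3)
    tribonacci_root_mult_bounds(1-4)[OF cubic, of X] tribonacci_root_mult_bounds(1-4)[OF cubic, of Y]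
    tribonacci_root_mult_bounds(5-8)[OF cubic, of F]
  consider "4 * Y \<le> 9 * X" | "9 * X < 4 * Y" "Y \<le> 7 * X" | "7 * X < Y" by linarith
  then show ?thesis
  proof cases
    case 1
    have "sign_pattern_a (mix_triple 1 (-1) (z0, z1, z2))"
      by (simp add: sign_pattern_a_def mix_triple_def, intro conjI; use facts 1 in linarith)
    then show ?thesis using z by (intro exI[of _ 1] exI[of _ "-1"]) simp
  next
    case 2
    \<comment> \<open>The error terms do not determine the sign of \<open>z1\<close> here, hence two witnesses.\<close>
    have "0 < z2" "z0 < 0" "0 < z1 + z2 - z0"
      by (use facts 2 in linarith)+
    show ?thesis
    proof (cases "z1 \<le> 0")
      case True
      then have "sign_pattern_a (mix_triple 1 0 (z0, z1, z2))"
        using \<open>0 < z2\<close> \<open>z0 < 0\<close> by (simp add: sign_pattern_a_def mix_triple_def)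
      then show ?thesis using z by (intro exI[of _ 1] exI[of _ 0]) simp
    next
      case False
      then have "sign_pattern_a (mix_triple 1 (-1) (z0, z1, z2))"
        using \<open>0 < z2\<close> \<open>0 < z1 + z2 - z0\<close> by (simp add: sign_pattern_a_def mix_triple_def)
      then show ?thesis using z by (intro exI[of _ 1] exI[of _ "-1"]) simp
    qed
  next
    case 3
    have "sign_pattern_a (mix_triple 1 0 (z0, z1, z2))"
      by (simp add: sign_pattern_a_def mix_triple_def, intro conjI; use facts 3 in linarith)
    then show ?thesis using z by (intro exI[of _ 1] exI[of _ 0]) simp
  qed
qed

lemma sign_pattern_a_cover_second_quadrant:
  fixes \<phi> X Y F :: real
  assumes cubic: "\<phi>^3 = \<phi>^2 + \<phi> + 1" and "X \<le> 0" "0 \<le> Y"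
    and small: "200 * \<bar>F\<bar> \<le> \<bar>X\<bar> + \<bar>Y\<bar>" and nonzero: "0 < \<bar>X\<bar> + \<bar>Y\<bar>"
  shows "\<exists>p q. \<bar>p\<bar> \<le> 1 \<and> \<bar>q\<bar> \<le> 1 \<and>
    sign_pattern_a (mix_triple (real_of_int p) (real_of_int q) (triple_of_coords \<phi> X Y F))"
proof -
  obtain z0 z1 z2 where z: "triple_of_coords \<phi> X Y F = (z0, z1, z2)" by (rule prod_cases3)
  then have "z0 = - 2 * (\<phi>^2 * X) + 2 * (\<phi> * X) + X - Y + \<phi>^2 * F"
    "z1 = \<phi> * X - \<phi>^2 * Y + \<phi> * Y + Y + \<phi> * F" "z2 = X + 2 * (\<phi> * Y) - Y + F"
    by (simp_all add: triple_of_coords_def)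
  note facts = this small nonzero abs_ge_self[of F] abs_ge_minus_self[of F] assms(2,3)
    tribonacci_root_mult_bounds(1-4)[OF cubic, of X] tribonacci_root_mult_bounds(1-4)[OF cubic, of Y]
    tribonacci_root_mult_bounds(5-8)[OF cubic, of F]
  consider "-2 * Y \<le> 5 * X" | "-9 * Y \<le> 10 * X" "5 * X < -2 * Y"
    | "-7 * Y \<le> 2 * X" "10 * X < -9 * Y" | "2 * X < -7 * Y" by linarith
  then show ?thesis
  proof cases
    case 1
    have "sign_pattern_a (mix_triple 1 0 (z0, z1, z2))"
      by (simp add: sign_pattern_a_def mix_triple_def, intro conjI; use facts 1 in linarith)
    then show ?thesis using z by (intro exI[of _ 1] exI[of _ 0]) simp
  next
    case 2
    have "sign_pattern_a (mix_triple 1 1 (z0, z1, z2))"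
      by (simp add: sign_pattern_a_def mix_triple_def, intro conjI; use facts 2 in linarith)
    then show ?thesis using z by (intro exI[of _ 1] exI[of _ 1]) simp
  next
    case 3
    have "sign_pattern_a (mix_triple 0 1 (z0, z1, z2))"
      by (simp add: sign_pattern_a_def mix_triple_def, intro conjI; use facts 3 in linarith)
    then show ?thesis using z by (intro exI[of _ 0] exI[of _ 1]) simp
  next
    case 4
    have "sign_pattern_a (mix_triple (-1) 1 (z0, z1, z2))"
      by (simp add: sign_pattern_a_def mix_triple_def, intro conjI; use facts 4 in linarith)
    then show ?thesis using z by (intro exI[of _ "-1"] exI[of _ 1]) simp
  qed
qed

lemma sign_pattern_b_cover_first_quadrant:
  fixes \<phi> X Y F :: real
  assumes cubic: "\<phi>^3 = \<phi>^2 + \<phi> + 1" and "0 \<le> X" "0 \<le> Y"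
    and small: "200 * \<bar>F\<bar> \<le> \<bar>X\<bar> + \<bar>Y\<bar>" and nonzero: "0 < \<bar>X\<bar> + \<bar>Y\<bar>"
  shows "\<exists>p q. \<bar>p\<bar> \<le> 1 \<and> \<bar>q\<bar> \<le> 1 \<and>
    sign_pattern_b (mix_triple (real_of_int p) (real_of_int q) (triple_of_coords \<phi> X Y F))"
proof -
  obtain z0 z1 z2 where z: "triple_of_coords \<phi> X Y F = (z0, z1, z2)" by (rule prod_cases3)
  then have "z0 = - 2 * (\<phi>^2 * X) + 2 * (\<phi> * X) + X - Y + \<phi>^2 * F"
    "z1 = \<phi> * X - \<phi>^2 * Y + \<phi> * Y + Y + \<phi> * F" "z2 = X + 2 * (\<phi> * Y) - Y + F"
    by (simp_all add: triple_of_coords_def)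
  note facts = this small nonzero abs_ge_self[of F] abs_ge_minus_self[of F] assms(2,3)
    tribonacci_root_mult_bounds(1-4)[OF cubic, of X] tribonacci_root_mult_bounds(1-4)[OF cubic, of Y]
    tribonacci_root_mult_bounds(5-8)[OF cubic, of F]
  have "sign_pattern_b (mix_triple 0 1 (z0, z1, z2))"
    by (simp add: sign_pattern_b_def mix_triple_def, intro conjI; use facts in linarith)
  then show ?thesis using z by (intro exI[of _ 0] exI[of _ 1]) simp
qed

lemma sign_pattern_b_cover_second_quadrant:
  fixes \<phi> X Y F :: real
  assumes cubic: "\<phi>^3 = \<phi>^2 + \<phi> + 1" and "X \<le> 0" "0 \<le> Y"
    and small: "200 * \<bar>F\<bar> \<le> \<bar>X\<bar> + \<bar>Y\<bar>" and nonzero: "0 < \<bar>X\<bar> + \<bar>Y\<bar>"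
  shows "\<exists>p q. \<bar>p\<bar> \<le> 1 \<and> \<bar>q\<bar> \<le> 1 \<and>
    sign_pattern_b (mix_triple (real_of_int p) (real_of_int q) (triple_of_coords \<phi> X Y F))"
proof -
  obtain z0 z1 z2 where z: "triple_of_coords \<phi> X Y F = (z0, z1, z2)" by (rule prod_cases3)
  then have "z0 = - 2 * (\<phi>^2 * X) + 2 * (\<phi> * X) + X - Y + \<phi>^2 * F"
    "z1 = \<phi> * X - \<phi>^2 * Y + \<phi> * Y + Y + \<phi> * F" "z2 = X + 2 * (\<phi> * Y) - Y + F"
    by (simp_all add: triple_of_coords_def)
  note facts = this small nonzero abs_ge_self[of F] abs_ge_minus_self[of F] assms(2,3)
    tribonacci_root_mult_bounds(1-4)[OF cubic, of X] tribonacci_root_mult_bounds(1-4)[OF cubic, of Y]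
    tribonacci_root_mult_bounds(5-8)[OF cubic, of F]
  consider "-9 * X \<le> 5 * Y" | "5 * Y < -9 * X" "-4 * X \<le> 9 * Y" | "9 * Y < -4 * X" by linarith
  then show ?thesis
  proof cases
    case 1
    have "sign_pattern_b (mix_triple (-1) 1 (z0, z1, z2))"
      by (simp add: sign_pattern_b_def mix_triple_def, intro conjI; use facts 1 in linarith)
    then show ?thesis using z by (intro exI[of _ "-1"] exI[of _ 1]) simp
  next
    case 2
    have "sign_pattern_b (mix_triple (-1) 0 (z0, z1, z2))"
      by (simp add: sign_pattern_b_def mix_triple_def, intro conjI; use facts 2 in linarith)
    then show ?thesis using z by (intro exI[of _ "-1"] exI[of _ 0]) simp
  next
    case 3
    have "sign_pattern_b (mix_triple (-1) (-1) (z0, z1, z2))"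
      by (simp add: sign_pattern_b_def mix_triple_def, intro conjI; use facts 3 in linarith)
    then show ?thesis using z by (intro exI[of _ "-1"] exI[of _ "-1"]) simp
  qed
qed

lemma mix_triple_coords_uminus:
  "mix_triple p q (triple_of_coords \<phi> (- X) (- Y) (- F)) = mix_triple (- p) (- q) (triple_of_coords \<phi> X Y F)"
  by (simp add: mix_triple_def triple_of_coords_def algebra_simps)

lemma cover_from_upper_quadrants:
  fixes \<phi> X Y F :: real and S :: "real \<times> real \<times> real \<Rightarrow> bool"
  defines "covered \<equiv> \<lambda>X Y F. \<exists>p q. \<bar>p\<bar> \<le> 1 \<and> \<bar>q\<bar> \<le> 1 \<and>
    S (mix_triple (real_of_int p) (real_of_int q) (triple_of_coords \<phi> X Y F))"
  assumes first: "\<And>X Y F. 0 \<le> X \<Longrightarrow> 0 \<le> Y \<Longrightarrow>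
      200 * \<bar>F\<bar> \<le> \<bar>X\<bar> + \<bar>Y\<bar> \<Longrightarrow> 0 < \<bar>X\<bar> + \<bar>Y\<bar> \<Longrightarrow> covered X Y F"
    and second: "\<And>X Y F. X \<le> 0 \<Longrightarrow> 0 \<le> Y \<Longrightarrow>
      200 * \<bar>F\<bar> \<le> \<bar>X\<bar> + \<bar>Y\<bar> \<Longrightarrow> 0 < \<bar>X\<bar> + \<bar>Y\<bar> \<Longrightarrow> covered X Y F"
    and small: "200 * \<bar>F\<bar> \<le> \<bar>X\<bar> + \<bar>Y\<bar>" and nonzero: "0 < \<bar>X\<bar> + \<bar>Y\<bar>"
  shows "covered X Y F"
proof -
  have upper: "covered X' Y' F'"
    if "0 \<le> Y'" "200 * \<bar>F'\<bar> \<le> \<bar>X'\<bar> + \<bar>Y'\<bar>" "0 < \<bar>X'\<bar> + \<bar>Y'\<bar>" for X' Y' F'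
    using first[OF _ that] second[OF _ that] by (cases "0 \<le> X'") auto
  show ?thesis
  proof (cases "0 \<le> Y")
    case True
    then show ?thesis using upper small nonzero by blast
  next
    case False
    then obtain p q where "\<bar>p\<bar> \<le> 1" "\<bar>q\<bar> \<le> 1"
      and "S (mix_triple (real_of_int p) (real_of_int q) (triple_of_coords \<phi> (- X) (- Y) (- F)))"
      using upper[of "- Y" "- F" "- X"] small nonzero unfolding covered_def by auto
    then show ?thesis
      unfolding covered_def mix_triple_coords_uminus by (intro exI[of _ "- p"] exI[of _ "- q"]) auto
  qed
qed

lemma sign_pattern_a_exists_large:
  fixes \<phi> :: real
  assumes cubic: "\<phi>^3 = \<phi>^2 + \<phi> + 1" and "5 \<le> m"
  shows "\<exists>p q. \<bar>p\<bar> \<le> 1 \<and> \<bar>q\<bar> \<le> 1 \<and>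
    sign_pattern_a (back_trib p q m, back_trib p q (Suc m), back_trib p q (Suc (Suc m)))"
proof -
  obtain D X Y F where "0 < D" "200 * \<bar>F\<bar> \<le> \<bar>X\<bar> + \<bar>Y\<bar>" "0 < \<bar>X\<bar> + \<bar>Y\<bar>"
    and coords: "triple_of_coords \<phi> X Y F = (D * of_int (back_trib 1 0 m),
      D * of_int (back_trib 1 0 (Suc m)), D * of_int (back_trib 1 0 (Suc (Suc m))))"
    using back_trib_coords[OF cubic \<open>5 \<le> m\<close>] .
  then have "\<exists>p q. \<bar>p\<bar> \<le> 1 \<and> \<bar>q\<bar> \<le> 1 \<and>
      sign_pattern_a (mix_triple (real_of_int p) (real_of_int q) (triple_of_coords \<phi> X Y F))"
    by (intro cover_from_upper_quadrants[OF sign_pattern_a_cover_first_quadrant[OF cubic]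
        sign_pattern_a_cover_second_quadrant[OF cubic]])
  then obtain p q where "\<bar>p\<bar> \<le> 1" "\<bar>q\<bar> \<le> 1"
    and "sign_pattern_a (mix_triple (real_of_int p) (real_of_int q) (triple_of_coords \<phi> X Y F))"
    by blast
  then have "sign_pattern_a (back_trib p q m, back_trib p q (Suc m), back_trib p q (Suc (Suc m)))"
    unfolding coords sign_pattern_a_mix_scale[OF \<open>0 < D\<close>] back_trib_triple[of p q m] by blast
  then show ?thesis using \<open>\<bar>p\<bar> \<le> 1\<close> \<open>\<bar>q\<bar> \<le> 1\<close> by blast
qed

lemma sign_pattern_a_exists:
  fixes \<phi> :: real
  assumes cubic: "\<phi>^3 = \<phi>^2 + \<phi> + 1" and "1 \<le> m"
  shows "\<exists>p q. \<bar>p\<bar> \<le> 1 \<and> \<bar>q\<bar> \<le> 1 \<and>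
    sign_pattern_a (back_trib p q m, back_trib p q (Suc m), back_trib p q (Suc (Suc m)))"
proof -
  consider "m = 1" | "m = 2" | "m = 3" | "m = 4" | "5 \<le> m" using \<open>1 \<le> m\<close> by linarith
  then show ?thesis
  proof cases
    case 5
    then show ?thesis by (rule sign_pattern_a_exists_large[OF cubic])
  next
    case 1
    have "sign_pattern_a (back_trib 0 (-1) 1, back_trib 0 (-1) 2, back_trib 0 (-1) 3)"
      by (simp add: sign_pattern_a_def eval_nat_numeral)
    then show ?thesis using 1 by (intro exI[of _ 0] exI[of _ "-1"]) (simp add: eval_nat_numeral)
  next
    case 2
    have "sign_pattern_a (back_trib (-1) 1 2, back_trib (-1) 1 3, back_trib (-1) 1 4)"
      by (simp add: sign_pattern_a_def eval_nat_numeral)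
    then show ?thesis using 2 by (intro exI[of _ "-1"] exI[of _ 1]) (simp add: eval_nat_numeral)
  next
    case 3
    have "sign_pattern_a (back_trib 1 0 3, back_trib 1 0 4, back_trib 1 0 5)"
      by (simp add: sign_pattern_a_def eval_nat_numeral)
    then show ?thesis using 3 by (intro exI[of _ 1] exI[of _ 0]) (simp add: eval_nat_numeral)
  next
    case 4
    have "sign_pattern_a (back_trib (-1) (-1) 4, back_trib (-1) (-1) 5, back_trib (-1) (-1) 6)"
      by (simp add: sign_pattern_a_def eval_nat_numeral)
    then show ?thesis using 4 by (intro exI[of _ "-1"] exI[of _ "-1"]) (simp add: eval_nat_numeral)
  qed
qed

lemma sign_pattern_b_exists_large:
  fixes \<phi> :: real
  assumes cubic: "\<phi>^3 = \<phi>^2 + \<phi> + 1" and "5 \<le> m"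
  shows "\<exists>p q. \<bar>p\<bar> \<le> 1 \<and> \<bar>q\<bar> \<le> 1 \<and>
    sign_pattern_b (back_trib p q m, back_trib p q (Suc m), back_trib p q (Suc (Suc m)))"
proof -
  obtain D X Y F where "0 < D" "200 * \<bar>F\<bar> \<le> \<bar>X\<bar> + \<bar>Y\<bar>" "0 < \<bar>X\<bar> + \<bar>Y\<bar>"
    and coords: "triple_of_coords \<phi> X Y F = (D * of_int (back_trib 1 0 m),
      D * of_int (back_trib 1 0 (Suc m)), D * of_int (back_trib 1 0 (Suc (Suc m))))"
    using back_trib_coords[OF cubic \<open>5 \<le> m\<close>] .
  then have "\<exists>p q. \<bar>p\<bar> \<le> 1 \<and> \<bar>q\<bar> \<le> 1 \<and>
      sign_pattern_b (mix_triple (real_of_int p) (real_of_int q) (triple_of_coords \<phi> X Y F))"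
    by (intro cover_from_upper_quadrants[OF sign_pattern_b_cover_first_quadrant[OF cubic]
        sign_pattern_b_cover_second_quadrant[OF cubic]])
  then obtain p q where "\<bar>p\<bar> \<le> 1" "\<bar>q\<bar> \<le> 1"
    and "sign_pattern_b (mix_triple (real_of_int p) (real_of_int q) (triple_of_coords \<phi> X Y F))"
    by blast
  then have "sign_pattern_b (back_trib p q m, back_trib p q (Suc m), back_trib p q (Suc (Suc m)))"
    unfolding coords sign_pattern_b_mix_scale[OF \<open>0 < D\<close>] back_trib_triple[of p q m] by blast
  then show ?thesis using \<open>\<bar>p\<bar> \<le> 1\<close> \<open>\<bar>q\<bar> \<le> 1\<close> by blast
qed

lemma sign_pattern_b_exists:
  fixes \<phi> :: real
  assumes cubic: "\<phi>^3 = \<phi>^2 + \<phi> + 1" and "1 \<le> m"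
  shows "\<exists>p q. \<bar>p\<bar> \<le> 1 \<and> \<bar>q\<bar> \<le> 1 \<and>
    sign_pattern_b (back_trib p q m, back_trib p q (Suc m), back_trib p q (Suc (Suc m)))"
proof -
  consider "m = 1" | "m = 2" | "m = 3" | "m = 4" | "5 \<le> m" using \<open>1 \<le> m\<close> by linarith
  then show ?thesis
  proof cases
    case 5
    then show ?thesis by (rule sign_pattern_b_exists_large[OF cubic])
  next
    case 1
    have "sign_pattern_b (back_trib 1 (-1) 1, back_trib 1 (-1) 2, back_trib 1 (-1) 3)"
      by (simp add: sign_pattern_b_def eval_nat_numeral)
    then show ?thesis using 1 by (intro exI[of _ 1] exI[of _ "-1"]) (simp add: eval_nat_numeral)
  next
    case 2
    have "sign_pattern_b (back_trib (-1) 0 2, back_trib (-1) 0 3, back_trib (-1) 0 4)"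
      by (simp add: sign_pattern_b_def eval_nat_numeral)
    then show ?thesis using 2 by (intro exI[of _ "-1"] exI[of _ 0]) (simp add: eval_nat_numeral)
  next
    case 3
    have "sign_pattern_b (back_trib 0 1 3, back_trib 0 1 4, back_trib 0 1 5)"
      by (simp add: sign_pattern_b_def eval_nat_numeral)
    then show ?thesis using 3 by (intro exI[of _ 0] exI[of _ 1]) (simp add: eval_nat_numeral)
  next
    case 4
    have "sign_pattern_b (back_trib 1 (-1) 4, back_trib 1 (-1) 5, back_trib 1 (-1) 6)"
      by (simp add: sign_pattern_b_def eval_nat_numeral)
    then show ?thesis using 4 by (intro exI[of _ 1] exI[of _ "-1"]) (simp add: eval_nat_numeral)
  qed
qed

lemma small_sequence_a:
  fixes \<phi> :: real
  assumes cubic: "\<phi>^3 = \<phi>^2 + \<phi> + 1" and "4 \<le> n"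
  shows "\<exists>a :: nat \<Rightarrow> int.
    (\<forall>i. 4 \<le> i \<and> i \<le> n \<longrightarrow> a i = a (i - 1) + a (i - 2) + a (i - 3)) \<and>
    a n = 0 \<and> a 1 > 0 \<and> a 2 \<le> 0 \<and> a 3 < 0 \<and>
    real_of_int (a 1) < 0.81 * \<phi> powr (real n / 2)"
proof -
  define m where "m = n - 3"
  have n: "n - 1 = Suc (Suc m)" "n - 2 = Suc m" "n - 3 = m" "n = m + 3"
    using \<open>4 \<le> n\<close> unfolding m_def by auto
  have "1 \<le> m" using \<open>4 \<le> n\<close> unfolding m_def by simp
  then obtain p q where pq: "\<bar>p\<bar> \<le> 1" "\<bar>q\<bar> \<le> 1"
    and "sign_pattern_a (back_trib p q m, back_trib p q (Suc m), back_trib p q (Suc (Suc m)))"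
    using sign_pattern_a_exists[OF cubic] by blast
  then have signs: "back_trib p q m < 0" "back_trib p q (Suc m) \<le> 0" "0 < back_trib p q (Suc (Suc m))"
    by (simp_all add: sign_pattern_a_def)
  have "real_of_int (back_trib p q (Suc (Suc m)))^2 < 0.81^2 * \<phi>^n"
    using sign_pattern_a_size_bound[OF cubic _ _ norm_form_back_trib_le[OF cubic pq]] signs n(4)
    by simp
  then have bound: "real_of_int (back_trib p q (Suc (Suc m))) < 0.81 * \<phi> powr (real n / 2)"
    using tribonacci_root_gt_one[OF cubic] by (intro less_mult_powr_half) auto
  show ?thesis
    using signs bound back_trib_reverse_rec[of _ n p q]
    by (intro exI[of _ "\<lambda>i. back_trib p q (n - i)"]) (simp add: n)
qed

lemma small_sequence_b:
  fixes \<phi> :: real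
  assumes cubic: "\<phi>^3 = \<phi>^2 + \<phi> + 1" and "4 \<le> n"
  shows "\<exists>b :: nat \<Rightarrow> int.
    (\<forall>i. 4 \<le> i \<and> i \<le> n \<longrightarrow> b i = b (i - 1) + b (i - 2) + b (i - 3)) \<and>
    b n = 0 \<and> b 2 > 0 \<and> b 1 \<le> 0 \<and> b 3 < 0 \<and>
    real_of_int (b 2) < 0.64 * \<phi> powr (real n / 2)"
proof -
  define m where "m = n - 3"
  have n: "n - 1 = Suc (Suc m)" "n - 2 = Suc m" "n - 3 = m" "n = m + 3"
    using \<open>4 \<le> n\<close> unfolding m_def by auto
  have "1 \<le> m" using \<open>4 \<le> n\<close> unfolding m_def by simp
  then obtain p q where pq: "\<bar>p\<bar> \<le> 1" "\<bar>q\<bar> \<le> 1"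
    and "sign_pattern_b (back_trib p q m, back_trib p q (Suc m), back_trib p q (Suc (Suc m)))"
    using sign_pattern_b_exists[OF cubic] by blast
  then have signs: "back_trib p q m < 0" "0 < back_trib p q (Suc m)" "back_trib p q (Suc (Suc m)) \<le> 0"
    by (simp_all add: sign_pattern_b_def)
  have "real_of_int (back_trib p q (Suc m))^2 < 0.64^2 * \<phi>^n"
    using sign_pattern_b_size_bound[OF cubic _ _ norm_form_back_trib_le[OF cubic pq]] signs n(4)
    by simp
  then have bound: "real_of_int (back_trib p q (Suc m)) < 0.64 * \<phi> powr (real n / 2)"
    using tribonacci_root_gt_one[OF cubic] by (intro less_mult_powr_half) auto
  show ?thesis
    using signs bound back_trib_reverse_rec[of _ n p q]
    by (intro exI[of _ "\<lambda>i. back_trib p q (n - i)"]) (simp add: n)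
qed

theorem lemma5:
  fixes \<phi> :: real
  assumes phi: "\<phi> ^ 3 = \<phi> ^ 2 + \<phi> + 1"
  shows "(\<forall>n::nat. n \<ge> 4 \<longrightarrow>
           (\<exists>a :: nat \<Rightarrow> int.
              (\<forall>i. 4 \<le> i \<and> i \<le> n \<longrightarrow> a i = a (i - 1) + a (i - 2) + a (i - 3)) \<and>
              a n = 0 \<and> a 1 > 0 \<and> a 2 \<le> 0 \<and> a 3 < 0 \<and>
              real_of_int (a 1) < 0.81 * \<phi> powr (real n / 2)))
       \<and> (\<forall>n::nat. n \<ge> 4 \<longrightarrow>
           (\<exists>b :: nat \<Rightarrow> int.
              (\<forall>i. 4 \<le> i \<and> i \<le> n \<longrightarrow> b i = b (i - 1) + b (i - 2) + b (i - 3)) \<and>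
              b n = 0 \<and> b 2 > 0 \<and> b 1 \<le> 0 \<and> b 3 < 0 \<and>
              real_of_int (b 2) < 0.64 * \<phi> powr (real n / 2)))"
  using small_sequence_a[OF phi] small_sequence_b[OF phi] by blast

end
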